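(* Let $T$ be a regular, $T_{\mathrm{bin}}$-free binary tree. Then there exists a constant $C\in\mathbb N$ such that every anti-chain $A\subseteq T$ (with respect to the prefix order) contains at most $C$ elements $u$ with $\mathrm{CB}_*(T\restriction u)=\mathrm{CB}_*(T)$.
   Context: A binary tree is a prefix-closed subset $T\subseteq\{0,1\}^*$; it is regular if it is a regular language over $\{0,1\}$. For $u\in T$, $T\restriction u=\{v\in\{0,1\}^*:uv\in T\}$. $T_{\mathrm{bin}}=\{0,1\}^*$ ordered by the prefix relation $\preceq$; $T$ is $T_{\mathrm{bin}}$-free if there is no injection $f:\{0,1\}^*\to T$ with $u\preceq v\iff f(u)\preceq f(v)$. An infinite branch of $T$ is an infinite prefix-closed subset of $T$ linearly ordered by $\preceq$. The derivative $d(T)$ is the set of $u\in T$ contained in at least two distinct infinite branches of $T$; $d^{(0)}(T)=T$, $d^{(n)}(T)=d(d^{(n-1)}(T))$. For regular $T_{\mathrm{bin}}$-free $T$ some $d^{(n)}(T)$ is finite, and $\mathrm{CB}_*(T)$ is the least $n\in\mathbb N$ such that $d^{(n)}(T)$ is finite. An anti-chain is a set of pairwise $\preceq$-incomparable elements. *)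

theory Defs
  imports Main "HOL-Library.Sublist"
begin

text \<open>Binary words: lists over bool (False = 0, True = 1); prefix order is Sublist.prefix.\<close>

definition binary_tree :: "bool list set \<Rightarrow> bool" where
  "binary_tree T \<longleftrightarrow> (\<forall>u v. u @ v \<in> T \<longrightarrow> u \<in> T)"

definition regular_lang :: "bool list set \<Rightarrow> bool" where
  "regular_lang L \<longleftrightarrow> (\<exists>(Q::nat set) (\<delta>::nat \<Rightarrow> bool \<Rightarrow> nat) q0 F.
      finite Q \<and> q0 \<in> Q \<and> (\<forall>q\<in>Q. \<forall>a. \<delta> q a \<in> Q) \<and> F \<subseteq> Q \<and>
      L = {w. foldl \<delta> q0 w \<in> F})"

definition restrict_tree :: "bool list set \<Rightarrow> bool list \<Rightarrow> bool list set" where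
  "restrict_tree T u = {v. u @ v \<in> T}"

definition Tbin_free :: "bool list set \<Rightarrow> bool" where
  "Tbin_free T \<longleftrightarrow> \<not> (\<exists>f :: bool list \<Rightarrow> bool list. inj f \<and> range f \<subseteq> T \<and>
      (\<forall>u v. prefix u v \<longleftrightarrow> prefix (f u) (f v)))"

definition infinite_branch :: "bool list set \<Rightarrow> bool list set \<Rightarrow> bool" where
  "infinite_branch T B \<longleftrightarrow> B \<subseteq> T \<and> infinite B \<and> (\<forall>u v. u @ v \<in> B \<longrightarrow> u \<in> B) \<and>
      (\<forall>u\<in>B. \<forall>v\<in>B. prefix u v \<or> prefix v u)"

definition derivative :: "bool list set \<Rightarrow> bool list set" where
  "derivative T = {u \<in> T. \<exists>B1 B2. infinite_branch T B1 \<and> infinite_branch T B2 \<and>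
      B1 \<noteq> B2 \<and> u \<in> B1 \<and> u \<in> B2}"

definition CB_star :: "bool list set \<Rightarrow> nat" where
  "CB_star T = (LEAST n. finite ((derivative ^^ n) T))"

definition antichain :: "bool list set \<Rightarrow> bool" where
  "antichain A \<longleftrightarrow> (\<forall>u\<in>A. \<forall>v\<in>A. u \<noteq> v \<longrightarrow> \<not> prefix u v \<and> \<not> prefix v u)"

end

theory Submission
  imports Defs
begin

text \<open>
  Let n = CB_*(T) and E = d^n(T), a finite set.  If n = 0 the tree itself is
  finite and bounds every antichain.  If n = m + 1, put D = d^m(T), so E = d(D).  Because the
  derivative commutes with passing to subtrees, CB_*(T|u) = n forces the subtree of D at u to be
  infinite, hence (Koenig) u lies on an infinite branch of D.  Two incomparable such nodes lie on
  distinct branches, so all their common prefixes are in d(D) = E.  Sending each node u of the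
  antichain to the first node on the path to u that leaves E is therefore injective, with values
  among the root and the children of E; this gives the bound 2 |E| + 1.
\<close>

lemma tree_prefix_closed: "binary_tree S \<Longrightarrow> w \<in> S \<Longrightarrow> prefix p w \<Longrightarrow> p \<in> S"
  by (auto simp: binary_tree_def prefix_def)

lemma branch_prefix_closed: "infinite_branch S B \<Longrightarrow> w \<in> B \<Longrightarrow> prefix p w \<Longrightarrow> p \<in> B"
  by (auto simp: infinite_branch_def prefix_def)

lemma branch_chain: "infinite_branch S B \<Longrightarrow> x \<in> B \<Longrightarrow> y \<in> B \<Longrightarrow> prefix x y \<or> prefix y x"
  by (auto simp: infinite_branch_def)

lemma branch_subset: "infinite_branch S B \<Longrightarrow> B \<subseteq> S"
  by (simp add: infinite_branch_def)

lemma branch_contains_Nil: "infinite_branch S B \<Longrightarrow> [] \<in> B"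
  by (metis branch_prefix_closed infinite_branch_def infinite_imp_nonempty ex_in_conv Nil_prefix)

lemma derivative_subset: "derivative S \<subseteq> S"
  by (auto simp: derivative_def)

lemma iterated_derivative_subset: "(derivative ^^ k) S \<subseteq> S"
  by (induction k) (use derivative_subset in auto)

lemma binary_tree_derivative:
  assumes "binary_tree S" shows "binary_tree (derivative S)"
  unfolding binary_tree_def
proof (intro allI impI)
  fix u v assume "u @ v \<in> derivative S"
  then obtain B1 B2 where "infinite_branch S B1" "infinite_branch S B2" "B1 \<noteq> B2"
    "u @ v \<in> B1" "u @ v \<in> B2" "u @ v \<in> S" by (auto simp: derivative_def)
  moreover have "prefix u (u @ v)" by simp
  ultimately show "u \<in> derivative S"
    unfolding derivative_def using branch_prefix_closed tree_prefix_closed[OF assms] by blast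
qed

lemma binary_tree_iterated_derivative: "binary_tree S \<Longrightarrow> binary_tree ((derivative ^^ k) S)"
  by (induction k) (auto intro: binary_tree_derivative)

section \<open>Branches of a subtree and the derivative of a subtree\<close>

text \<open>Branches of the subtree S|u correspond to the branches of S through u: a branch B of S|u
  is grafted onto the path from the root to u, and conversely a branch of S through u is cut at u.\<close>
definition graft :: "bool list \<Rightarrow> bool list set \<Rightarrow> bool list set" where
  "graft u B = {w. prefix w u} \<union> (@) u ` B"

lemma graft_branch:
  assumes S: "binary_tree S" and B: "infinite_branch (restrict_tree S u) B"
  shows "infinite_branch S (graft u B)"
  unfolding infinite_branch_def
proof (intro conjI allI impI ballI)
  have "u \<in> S"
    using branch_contains_Nil[OF B] branch_subset[OF B] by (auto simp: restrict_tree_def)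
  then show "graft u B \<subseteq> S"
    using branch_subset[OF B] tree_prefix_closed[OF S] by (auto simp: graft_def restrict_tree_def)
  have "inj ((@) u)" by (rule injI) simp
  then show "infinite (graft u B)"
    using B by (auto simp: infinite_branch_def graft_def dest: finite_imageD inj_on_subset)
next
  fix x y assume "x @ y \<in> graft u B"
  then consider "prefix (x @ y) u" | v where "v \<in> B" "x @ y = u @ v"
    by (auto simp: graft_def)
  then show "x \<in> graft u B"
  proof cases
    case 1
    then show ?thesis by (auto simp: graft_def intro: prefix_order.trans[of x "x @ y"])
  next
    case 2
    then have "prefix x (u @ v)" by (metis prefix_def)
    then show ?thesis
      using branch_prefix_closed[OF B \<open>v \<in> B\<close>] by (auto simp: graft_def prefix_append)
  qed
next
  fix x y assume "x \<in> graft u B" "y \<in> graft u B"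
  then consider "prefix x u" "prefix y u" | "prefix x u" "prefix u y" | "prefix y u" "prefix u x"
    | v w where "v \<in> B" "w \<in> B" "x = u @ v" "y = u @ w"
    by (auto simp: graft_def)
  then show "prefix x y \<or> prefix y x"
    by cases (use prefix_same_cases prefix_order.trans branch_chain[OF B] in auto)
qed

lemma restrict_graft: "[] \<in> B \<Longrightarrow> {v. u @ v \<in> graft u B} = B"
  by (auto simp: graft_def prefix_def)

lemma graft_restrict:
  assumes B: "infinite_branch S B" and u: "u \<in> B"
  shows "graft u {v. u @ v \<in> B} = B"
proof
  show "B \<subseteq> graft u {v. u @ v \<in> B}"
    using branch_chain[OF B _ u] by (force simp: graft_def prefix_def)
  show "graft u {v. u @ v \<in> B} \<subseteq> B"
    using branch_prefix_closed[OF B u] by (auto simp: graft_def)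
qed

lemma restrict_branch:
  assumes B: "infinite_branch S B" and u: "u \<in> B"
  shows "infinite_branch (restrict_tree S u) {v. u @ v \<in> B}"
  unfolding infinite_branch_def
proof (intro conjI allI impI ballI)
  show "{v. u @ v \<in> B} \<subseteq> restrict_tree S u"
    using branch_subset[OF B] by (auto simp: restrict_tree_def)
  have "finite {w. prefix w u}"
    by (metis set_prefixes_eq List.finite_set)
  then show "infinite {v. u @ v \<in> B}"
    using B graft_restrict[OF B u] by (metis graft_def infinite_branch_def finite_UnI finite_imageI)
next
  fix x y assume "x @ y \<in> {v. u @ v \<in> B}"
  then show "x \<in> {v. u @ v \<in> B}"
    using branch_prefix_closed[OF B, of "u @ x @ y" "u @ x"] by auto
next
  fix x y assume "x \<in> {v. u @ v \<in> B}" "y \<in> {v. u @ v \<in> B}"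
  then show "prefix x y \<or> prefix y x"
    using branch_chain[OF B, of "u @ x" "u @ y"] by auto
qed

text \<open>The derivative commutes with taking subtrees; this is what makes CB_* of a
  subtree computable from the iterated derivatives of the whole tree.\<close>
lemma derivative_restrict_tree:
  assumes S: "binary_tree S"
  shows "derivative (restrict_tree S u) = restrict_tree (derivative S) u"
proof
  show "derivative (restrict_tree S u) \<subseteq> restrict_tree (derivative S) u"
  proof
    fix v assume "v \<in> derivative (restrict_tree S u)"
    then obtain B1 B2 where B: "infinite_branch (restrict_tree S u) B1"
      "infinite_branch (restrict_tree S u) B2" "B1 \<noteq> B2" "v \<in> B1" "v \<in> B2"
      by (auto simp: derivative_def)
    have "graft u B1 \<noteq> graft u B2"
      using B(3) restrict_graft[OF branch_contains_Nil[OF B(1)]]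
        restrict_graft[OF branch_contains_Nil[OF B(2)]] by metis
    moreover have "u @ v \<in> graft u B1" "u @ v \<in> graft u B2" "u @ v \<in> S"
      using B(4,5) branch_subset[OF B(1)] by (auto simp: graft_def restrict_tree_def)
    ultimately show "v \<in> restrict_tree (derivative S) u"
      using graft_branch[OF S B(1)] graft_branch[OF S B(2)]
      unfolding derivative_def restrict_tree_def by blast
  qed
next
  show "restrict_tree (derivative S) u \<subseteq> derivative (restrict_tree S u)"
  proof
    fix v assume "v \<in> restrict_tree (derivative S) u"
    then obtain B1 B2 where B: "infinite_branch S B1" "infinite_branch S B2" "B1 \<noteq> B2"
      "u @ v \<in> B1" "u @ v \<in> B2" "u @ v \<in> S"
      by (auto simp: derivative_def restrict_tree_def)
    have u: "u \<in> B1" "u \<in> B2" using branch_prefix_closed B(1,2,4,5) by auto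
    have "{v. u @ v \<in> B1} \<noteq> {v. u @ v \<in> B2}"
      using B(3) graft_restrict[OF B(1) u(1)] graft_restrict[OF B(2) u(2)] by metis
    then show "v \<in> derivative (restrict_tree S u)"
      using restrict_branch[OF B(1) u(1)] restrict_branch[OF B(2) u(2)] B(4-6)
      unfolding derivative_def restrict_tree_def by blast
  qed
qed

lemma iterated_derivative_restrict_tree:
  "binary_tree S \<Longrightarrow> (derivative ^^ k) (restrict_tree S u) = restrict_tree ((derivative ^^ k) S) u"
  by (induction k) (auto simp: derivative_restrict_tree binary_tree_iterated_derivative)

lemma mem_iterated_derivative:
  "binary_tree S \<Longrightarrow> u \<in> (derivative ^^ k) S \<longleftrightarrow> [] \<in> (derivative ^^ k) (restrict_tree S u)"
  using iterated_derivative_restrict_tree[of S k u] by (simp add: restrict_tree_def)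

section \<open>Koenig's lemma\<close>

text \<open>An infinite subtree splits into its root and the two subtrees of the children, so one of
  these is infinite.\<close>
lemma infinite_restrict_tree_child:
  assumes "infinite (restrict_tree D w)"
  shows "\<exists>b. infinite (restrict_tree D (w @ [b]))"
proof (rule ccontr)
  assume "\<not> ?thesis"
  then have "finite (insert [] (\<Union>b. (#) b ` restrict_tree D (w @ [b])))" by simp
  moreover have "restrict_tree D w \<subseteq> insert [] (\<Union>b. (#) b ` restrict_tree D (w @ [b]))"
  proof
    fix z assume "z \<in> restrict_tree D w"
    then show "z \<in> insert [] (\<Union>b. (#) b ` restrict_tree D (w @ [b]))"
      by (cases z) (auto simp: restrict_tree_def)
  qed
  ultimately show False using assms finite_subset by blast
qed

fun greedy_path :: "bool list set \<Rightarrow> bool list \<Rightarrow> nat \<Rightarrow> bool list" where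
  "greedy_path D u 0 = u"
| "greedy_path D u (Suc k) = (let w = greedy_path D u k in
     w @ [SOME b. infinite (restrict_tree D (w @ [b]))])"

lemma greedy_path_infinite:
  "infinite (restrict_tree D u) \<Longrightarrow> infinite (restrict_tree D (greedy_path D u k))"
proof (induction k)
  case (Suc k)
  then show ?case
    using someI_ex[OF infinite_restrict_tree_child[OF Suc.IH[OF Suc.prems]]] by (simp add: Let_def)
qed simp

lemma length_greedy_path: "length (greedy_path D u k) = length u + k"
  by (induction k) (auto simp: Let_def)

lemma greedy_path_mono: "i \<le> j \<Longrightarrow> prefix (greedy_path D u i) (greedy_path D u j)"
proof (induction j)
  case (Suc j)
  then show ?case
    by (cases "i = Suc j") (auto simp: Let_def intro: prefix_prefix)
qed simp

lemma infinite_subtree_has_branch: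
  assumes D: "binary_tree D" and inf: "infinite (restrict_tree D u)"
  shows "\<exists>B. infinite_branch D B \<and> u \<in> B"
proof -
  let ?p = "greedy_path D u"
  define B where "B = {w. \<exists>k. prefix w (?p k)}"
  have path_in_D: "?p k \<in> D" for k
  proof -
    obtain z where "z \<in> restrict_tree D (?p k)"
      using greedy_path_infinite[OF inf, of k] infinite_imp_nonempty by blast
    then show ?thesis by (auto simp: restrict_tree_def intro: tree_prefix_closed[OF D])
  qed
  have "infinite_branch D B" unfolding infinite_branch_def
  proof (intro conjI allI impI ballI)
    show "B \<subseteq> D" using path_in_D tree_prefix_closed[OF D] unfolding B_def by blast
    have "inj ?p" by (rule injI) (metis length_greedy_path add_left_imp_eq)
    moreover have "range ?p \<subseteq> B" by (auto simp: B_def)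
    ultimately show "infinite B" using finite_imageD finite_subset infinite_UNIV_nat by metis
  next
    fix x y assume "x @ y \<in> B" then show "x \<in> B"
      by (auto simp: B_def prefix_def)
  next
    fix x y assume "x \<in> B" "y \<in> B"
    then obtain i j where "prefix x (?p i)" "prefix y (?p j)" unfolding B_def by blast
    then show "prefix x y \<or> prefix y x"
      using greedy_path_mono[of i j] greedy_path_mono[of j i] prefix_same_cases
      by (metis nat_le_linear prefix_order.trans)
  qed
  moreover have "u \<in> B" unfolding B_def by (metis greedy_path.simps(1) prefix_order.refl mem_Collect_eq)
  ultimately show ?thesis by blast
qed

section \<open>Perfect subtrees contain a copy of the full binary tree\<close>

text \<open>Two distinct branches through w contain incomparable extensions of w: take a node x on one
  branch but not the other, and a node y on the other branch that is longer than x.\<close>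
lemma distinct_branches_split:
  assumes B1: "infinite_branch D B1" and B2: "infinite_branch D B2"
    and w: "w \<in> B1" "w \<in> B2" and x: "x \<in> B1" "x \<notin> B2"
  shows "\<exists>x y. x \<in> D \<and> y \<in> D \<and> prefix w x \<and> prefix w y \<and> \<not> prefix x y \<and> \<not> prefix y x"
proof -
  have "finite {y :: bool list. length y \<le> length x}"
    using finite_lists_length_le[of "UNIV :: bool set" "length x"] by simp
  moreover have "infinite B2" using B2 by (simp add: infinite_branch_def)
  ultimately have "\<not> B2 \<subseteq> {y. length y \<le> length x}" using finite_subset by blast
  then obtain y where y: "y \<in> B2" "length x < length y"
    by (metis (mono_tags) mem_Collect_eq not_le subsetI)
  have wx: "prefix w x"
    using branch_chain[OF B1 w(1) x(1)] branch_prefix_closed[OF B2 w(2)] x(2) by blast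
  have "\<not> prefix y w" using wx y(2) prefix_length_le by (metis le_trans not_le)
  then have wy: "prefix w y" using branch_chain[OF B2 w(2) y(1)] by blast
  have "\<not> prefix x y" using branch_prefix_closed[OF B2 y(1)] x(2) by blast
  moreover have "\<not> prefix y x" using y(2) prefix_length_le not_le by blast
  moreover have "x \<in> D" "y \<in> D" using x(1) y(1) B1 B2 by (auto dest: branch_subset)
  ultimately show ?thesis using wx wy by blast
qed

lemma derivative_node_splits:
  assumes "w \<in> derivative D"
  shows "\<exists>x y. x \<in> D \<and> y \<in> D \<and> prefix w x \<and> prefix w y \<and> \<not> prefix x y \<and> \<not> prefix y x"
proof -
  obtain B1 B2 where B: "infinite_branch D B1" "infinite_branch D B2" "B1 \<noteq> B2" "w \<in> B1" "w \<in> B2"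
    using assms by (auto simp: derivative_def)
  then obtain x where "x \<in> B1 \<and> x \<notin> B2 \<or> x \<in> B2 \<and> x \<notin> B1" by blast
  then show ?thesis
    using distinct_branches_split[OF B(1,2,4,5)] distinct_branches_split[OF B(2,1,5,4)] by blast
qed

lemma splitting_map_embeds:
  fixes c :: "'a list \<Rightarrow> bool \<Rightarrow> 'a list"
  assumes closed: "\<And>w b. w \<in> D \<Longrightarrow> c w b \<in> D"
    and extends: "\<And>w b. w \<in> D \<Longrightarrow> prefix w (c w b)"
    and separates: "\<And>w b b'. w \<in> D \<Longrightarrow> b \<noteq> b' \<Longrightarrow> \<not> prefix (c w b) (c w b')"
    and root: "w0 \<in> D"
  shows "prefix u v \<longleftrightarrow> prefix (foldl c w0 u) (foldl c w0 v)"
proof -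
  let ?f = "foldl c w0"
  have strict: "w \<in> D \<Longrightarrow> strict_prefix w (c w b)" for w b
    using extends separates[of w b "\<not> b"] by (metis strict_prefix_def)
  have fold_in_D: "w \<in> D \<Longrightarrow> foldl c w z \<in> D" for w z
    by (induction z arbitrary: w) (auto simp: closed)
  have fold_extends: "w \<in> D \<Longrightarrow> prefix w (foldl c w z)" for w z
    by (induction z arbitrary: w) (auto intro: prefix_order.trans extends closed)
  have fold_grows: "w \<in> D \<Longrightarrow> z \<noteq> [] \<Longrightarrow> length w < length (foldl c w z)" for w z
  proof (induction z arbitrary: w)
    case (Cons b z)
    show ?case
  proof -
    have "length (c w b) \<le> length (foldl c (c w b) z)"
      using fold_extends[OF closed[OF Cons.prems(1)]] prefix_length_le by blast
    moreover have "length w < length (c w b)"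
      using prefix_length_less strict[OF Cons.prems(1)] by blast
    ultimately show ?case by simp
  qed
  qed simp
  have f_in_D: "?f z \<in> D" for z using fold_in_D root by simp
  show ?thesis
  proof
    assume "prefix u v"
    then show "prefix (?f u) (?f v)" using fold_extends[OF f_in_D] by (auto simp: prefix_def)
  next
    assume fuv: "prefix (?f u) (?f v)"
    show "prefix u v"
    proof (rule ccontr)
      assume nuv: "\<not> prefix u v"
      show False
      proof (cases "prefix v u")
        case True
        then obtain z where "u = v @ z" "z \<noteq> []" using nuv by (auto simp: prefix_def)
        then have "length (?f v) < length (?f u)" using fold_grows[OF f_in_D] by simp
        then show False using fuv prefix_length_le by fastforce
      next
        case False
        then obtain as b bs b' cs where d: "b \<noteq> b'" "u = as @ b # bs" "v = as @ b' # cs"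
          using nuv parallel_decomp[of u v] by (auto simp: parallel_def)
        let ?w = "?f as"
        have "prefix (c ?w b) (?f u)" "prefix (c ?w b') (?f v)"
          using fold_extends[OF closed[OF f_in_D]] d(2,3) by auto
        then have "prefix (c ?w b) (c ?w b') \<or> prefix (c ?w b') (c ?w b)"
          using fuv prefix_same_cases prefix_order.trans by metis
        then show False using separates[OF f_in_D] d(1) by metis
      qed
    qed
  qed
qed

lemma perfect_subset_not_Tbin_free:
  assumes perfect: "derivative D = D" and nonempty: "D \<noteq> {}" and sub: "D \<subseteq> T"
  shows "\<not> Tbin_free T"
proof -
  let ?splits = "\<lambda>w p. fst p \<in> D \<and> snd p \<in> D \<and> prefix w (fst p) \<and> prefix w (snd p)
      \<and> \<not> prefix (fst p) (snd p) \<and> \<not> prefix (snd p) (fst p)"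
  have "\<forall>w\<in>D. \<exists>p. ?splits w p" using derivative_node_splits perfect by fastforce
  then obtain g where g: "\<And>w. w \<in> D \<Longrightarrow> ?splits w (g w)" using bchoice by metis
  define c where "c w b = (if b then fst (g w) else snd (g w))" for w b
  obtain w0 where w0: "w0 \<in> D" using nonempty by blast
  have emb: "prefix u v \<longleftrightarrow> prefix (foldl c w0 u) (foldl c w0 v)" for u v
    by (rule splitting_map_embeds[OF _ _ _ w0]) (auto simp: c_def g split: if_splits)
  have "w \<in> D \<Longrightarrow> foldl c w u \<in> D" for w u
    by (induction u arbitrary: w) (auto simp: c_def g)
  then have "foldl c w0 u \<in> D" for u using w0 by blast
  moreover have "inj (foldl c w0)"
    by (rule injI) (metis emb prefix_order.antisym prefix_order.refl)
  ultimately show ?thesis unfolding Tbin_free_def using emb sub by blast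
qed

section \<open>Regular T_bin-free trees have finite Cantor-Bendixson rank\<close>

text \<open>A regular tree has only finitely many distinct subtrees: the subtree at u is determined by
  the state the automaton reaches after reading u.\<close>
lemma regular_finitely_many_subtrees:
  assumes "regular_lang T"
  shows "finite (range (restrict_tree T))"
proof -
  obtain Q :: "nat set" and \<delta> q0 F where A: "finite Q" "q0 \<in> Q" "\<forall>q\<in>Q. \<forall>a. \<delta> q a \<in> Q"
    "T = {w. foldl \<delta> q0 w \<in> F}"
    using assms unfolding regular_lang_def by blast
  have reach: "q \<in> Q \<Longrightarrow> foldl \<delta> q w \<in> Q" for q w
    using A(3) by (induction w arbitrary: q) auto
  have "restrict_tree T u = (\<lambda>q. {v. foldl \<delta> q v \<in> F}) (foldl \<delta> q0 u)" for u
    by (simp add: restrict_tree_def A(4))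
  then have "range (restrict_tree T) \<subseteq> (\<lambda>q. {v. foldl \<delta> q v \<in> F}) ` Q"
    using reach[OF A(2)] by auto
  then show ?thesis using A(1) finite_subset by blast
qed

lemma decreasing_sets_stabilize:
  fixes X :: "nat \<Rightarrow> 'a set"
  assumes fin: "finite (X 0)" and dec: "\<And>k. X (Suc k) \<subseteq> X k"
  shows "\<exists>K. X (Suc K) = X K"
proof (rule ccontr)
  assume "\<not> ?thesis"
  then have strict: "X (Suc k) \<subset> X k" for k using dec by blast
  have finite: "finite (X k)" for k
    by (induction k) (use fin dec finite_subset in blast)+
  have "card (X k) + k \<le> card (X 0)" for k
  proof (induction k)
    case (Suc k)
    then show ?case using psubset_card_mono[OF finite strict[of k]] by simp
  qed simp
  then show False by (metis add_leD2 not_less_eq_eq)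
qed

text \<open>For a regular T_bin-free tree the iterated derivatives eventually vanish: by regularity they
  stabilise after finitely many steps, and a stable nonempty derivative would be a perfect subtree.\<close>
lemma iterated_derivative_vanishes:
  assumes T: "binary_tree T" and reg: "regular_lang T" and free: "Tbin_free T"
  shows "\<exists>K. (derivative ^^ K) T = {}"
proof -
  define X where "X k = {R \<in> range (restrict_tree T). [] \<in> (derivative ^^ k) R}" for k
  have mem: "u \<in> (derivative ^^ k) T \<longleftrightarrow> restrict_tree T u \<in> X k" for u k
    using mem_iterated_derivative[OF T] by (simp add: X_def)
  have "(derivative ^^ Suc k) R \<subseteq> (derivative ^^ k) R" for k R
    using derivative_subset by simp
  then have "X (Suc k) \<subseteq> X k" for k unfolding X_def by blast
  moreover have "finite (X 0)"
    using regular_finitely_many_subtrees[OF reg] unfolding X_def by simp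
  ultimately obtain K where "X (Suc K) = X K" using decreasing_sets_stabilize by blast
  then have "derivative ((derivative ^^ K) T) = (derivative ^^ K) T"
    using mem[of _ K] mem[of _ "Suc K"] by auto
  then show ?thesis
    using perfect_subset_not_Tbin_free iterated_derivative_subset free by blast
qed

lemma CB_star_finite: "finite ((derivative ^^ n) S) \<Longrightarrow> finite ((derivative ^^ CB_star S) S)"
  unfolding CB_star_def by (rule LeastI)

lemma CB_star_le: "finite ((derivative ^^ n) S) \<Longrightarrow> CB_star S \<le> n"
  unfolding CB_star_def by (rule Least_le)

section \<open>Antichains of nodes of maximal rank\<close>

definition children :: "'a list set \<Rightarrow> 'a list set" where
  "children E = (\<lambda>(p, b). p @ [b]) ` (E \<times> UNIV)"

lemma card_children: "finite E \<Longrightarrow> card (children (E :: bool list set)) \<le> 2 * card E"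
  unfolding children_def using card_image_le[of "E \<times> UNIV" "\<lambda>(p, b). p @ [b]"]
  by (simp add: card_cartesian_product)

fun exit_from :: "'a list set \<Rightarrow> 'a list \<Rightarrow> 'a list \<Rightarrow> 'a list" where
  "exit_from E p [] = p"
| "exit_from E p (b # bs) = (if p \<in> E then exit_from E (p @ [b]) bs else p)"

lemma exit_from_prefix: "prefix (exit_from E p bs) (p @ bs)"
proof (induction bs arbitrary: p)
  case (Cons b bs)
  then show ?case using Cons.IH[of "p @ [b]"] by auto
qed simp

lemma exit_from_in_set: "exit_from E p bs \<in> E \<Longrightarrow> exit_from E p bs = p @ bs"
proof (induction bs arbitrary: p)
  case (Cons b bs)
  then show ?case using Cons.IH[of "p @ [b]"] by (auto split: if_splits)
qed simp

lemma exit_from_range: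
  "p = [] \<or> p \<in> children E \<Longrightarrow> exit_from E p bs \<in> insert [] (children E)"
proof (induction bs arbitrary: p)
  case (Cons b bs)
  have "p @ [b] \<in> children E" if "p \<in> E" using that by (force simp: children_def)
  then show ?case using Cons by auto
qed auto

text \<open>Two incomparable nodes with infinite subtrees lie on two distinct branches, so every common
  prefix of them belongs to the derivative.\<close>
lemma common_prefix_in_derivative:
  assumes D: "binary_tree D"
    and inf: "infinite (restrict_tree D u)" "infinite (restrict_tree D v)"
    and incomparable: "\<not> prefix u v" "\<not> prefix v u"
    and p: "prefix p u" "prefix p v"
  shows "p \<in> derivative D"
proof -
  obtain Bu where Bu: "infinite_branch D Bu" "u \<in> Bu"
    using infinite_subtree_has_branch[OF D inf(1)] by blast
  obtain Bv where Bv: "infinite_branch D Bv" "v \<in> Bv"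
    using infinite_subtree_has_branch[OF D inf(2)] by blast
  have "Bu \<noteq> Bv" using branch_chain[OF Bu] Bv(2) incomparable by blast
  moreover have "p \<in> Bu" "p \<in> Bv"
    using branch_prefix_closed Bu Bv p by blast+
  moreover have "p \<in> D" using branch_subset[OF Bu(1)] \<open>p \<in> Bu\<close> by blast
  ultimately show ?thesis unfolding derivative_def using Bu(1) Bv(1) by blast
qed

text \<open>Each node u is sent to the first node on the path to u that lies
  outside d(D); this map is injective on antichains and takes values in the root and the children
  of d(D).\<close>
lemma antichain_bound:
  assumes D: "binary_tree D" and fin: "finite (derivative D)" and S: "antichain S"
    and inf: "\<And>u. u \<in> S \<Longrightarrow> infinite (restrict_tree D u)"
  shows "finite S \<and> card S \<le> 2 * card (derivative D) + 1"
proof -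
  let ?E = "derivative D"
  let ?exit = "exit_from ?E []"
  have inj: "inj_on ?exit S"
  proof (rule inj_onI, rule ccontr)
    fix u v assume u: "u \<in> S" and v: "v \<in> S" and eq: "?exit u = ?exit v" and "u \<noteq> v"
    then have incomparable: "\<not> prefix u v" "\<not> prefix v u" using S by (auto simp: antichain_def)
    have "prefix (?exit u) u" "prefix (?exit u) v"
      using exit_from_prefix[of ?E "[]" u] exit_from_prefix[of ?E "[]" v] eq by simp_all
    then have "?exit u \<in> ?E"
      using common_prefix_in_derivative[OF D inf[OF u] inf[OF v] incomparable] by blast
    then have "?exit u = u" using exit_from_in_set[of ?E "[]" u] by simp
    then show False using \<open>prefix (?exit u) v\<close> incomparable by simp
  qed
  let ?R = "insert [] (children ?E)"
  have "?exit u \<in> ?R" for u by (rule exit_from_range) simp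
  then have range: "?exit ` S \<subseteq> ?R" by blast
  have fin_R: "finite ?R" using fin by (simp add: children_def)
  have "finite S" using finite_imageD[OF finite_subset[OF range fin_R] inj] .
  have "card S = card (?exit ` S)" using card_image[OF inj] by simp
  also have "\<dots> \<le> card ?R" using card_mono[OF fin_R range] .
  also have "\<dots> \<le> 2 * card ?E + 1"
    using card_children[OF fin] fin_R by (simp add: card_insert_if)
  finally show ?thesis using \<open>finite S\<close> by blast
qed


theorem lemma5p6:
  fixes T :: "bool list set"
  assumes "binary_tree T" and "regular_lang T" and "Tbin_free T"
  shows "\<exists>C::nat. \<forall>A. A \<subseteq> T \<and> antichain A \<longrightarrow>
           finite {u \<in> A. CB_star (restrict_tree T u) = CB_star T} \<and>
           card {u \<in> A. CB_star (restrict_tree T u) = CB_star T} \<le> C"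
proof -
  obtain K where "(derivative ^^ K) T = {}"
    using iterated_derivative_vanishes[OF assms] by blast
  then have fin: "finite ((derivative ^^ CB_star T) T)" using CB_star_finite[of K] by simp
  define E where "E = (derivative ^^ CB_star T) T"
  show ?thesis
  proof (intro exI allI impI)
    fix A assume A: "A \<subseteq> T \<and> antichain A"
    define S where "S = {u \<in> A. CB_star (restrict_tree T u) = CB_star T}"
    show "finite S \<and> card S \<le> 2 * card E + 1"
    proof (cases "CB_star T")
      case 0
      then have "S \<subseteq> E" "finite E" using A fin by (auto simp: S_def E_def)
      then show ?thesis using finite_subset card_mono[of E S] by simp
    next
      case (Suc m)
      have "infinite (restrict_tree ((derivative ^^ m) T) u)" if "u \<in> S" for u
      proof
        assume "finite (restrict_tree ((derivative ^^ m) T) u)"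
        then have "CB_star (restrict_tree T u) \<le> m"
          using iterated_derivative_restrict_tree[OF assms(1), of m u] CB_star_le by simp
        then show False using that Suc by (simp add: S_def)
      qed
      moreover have "antichain S" using A by (auto simp: S_def antichain_def)
      ultimately show ?thesis
        using antichain_bound[OF binary_tree_iterated_derivative[OF assms(1)]] fin Suc
        by (simp add: E_def)
    qed
  qed
qed

end
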